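(* The interaction-free subspace satisfies $W=\operatorname{ran}|Z|_1^\perp$, where $|Z|_1^\perp=P_1-Z_1^*Z_1$.
   Context: Fix integers $N\ge 2$ and $n_1\ge n_2\ge\dots\ge n_N\ge 1$. Let $\mathcal H$ be a finite-dimensional complex Hilbert space with orthonormal basis $\{|-\rangle,|+\rangle\}\cup\{|a_k\rangle:1\le k\le N,\ 0\le a\le n_k-1\}$. For vectors $x,y$, $|x\rangle\langle y|$ denotes the operator $u\mapsto\langle y,u\rangle x$. Put $E_k=\mathrm{span}\{|a_k\rangle:0\le a\le n_k-1\}$, $P_k$ the orthogonal projection onto $E_k$, $\zeta_k=e^{2\pi i/n_k}$, and $\varphi_{a_k}=n_k^{-1/2}\sum_{b=0}^{n_k-1}\zeta_k^{-ba}|b_k\rangle$. For $1\le k\le N-1$ let $Z_k=n_k^{-1/2}\sum_{b=0}^{n_{k+1}-1}\sum_{a=0}^{n_k-1}\zeta_k^{ba}|b_{k+1}\rangle\langle a_k|$ (an operator on $\mathcal H$). Let $\omega$ range over $\{\omega_+,\omega_-,\omega_1,\dots,\omega_{N-1}\}$ and let $\Gamma_{\pm,\omega}>0$ be constants. Kraus operators: $L_{-,\omega_+}=\sqrt{n_1\Gamma_{-,\omega_+}}|\varphi_{0_1}\rangle\langle +|$, $L_{+,\omega_+}=\sqrt{n_1\Gamma_{+,\omega_+}}|+\rangle\langle\varphi_{0_1}|$, $L_{-,\omega_k}=\sqrt{\Gamma_{-,\omega_k}}Z_k$, $L_{+,\omega_k}=\sqrt{\Gamma_{+,\omega_k}}Z_k^*$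 ($1\le k\le N-1$), $L_{-,\omega_-}=\sqrt{\Gamma_{-,\omega_-}}|-\rangle\langle\varphi_{0_N}|$, $L_{+,\omega_-}=0$. The interaction-free subspace is $W=\bigcap_{\omega}\bigcap_{\epsilon=\pm}(\ker L_{\epsilon,\omega}\cap\ker L_{\epsilon,\omega}^* )$. *)

theory Defs
  imports Complex_Main
begin

text \<open>Basis labels of the Hilbert space: BMinus = |->, BPlus = |+>,
  BL k a = |a_k> (relevant only for 1 \<le> k \<le> N, a < n k).\<close>
datatype bidx = BMinus | BPlus | BL nat nat

datatype omega = OPlus | OMinus | OK nat
datatype sgn = SPlus | SMinus

definition basis_idx :: "nat \<Rightarrow> (nat \<Rightarrow> nat) \<Rightarrow> bidx set" where
  "basis_idx N n = {BMinus, BPlus} \<union> {BL k a | k a. 1 \<le> k \<and> k \<le> N \<and> a < n k}"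

definition hspace :: "nat \<Rightarrow> (nat \<Rightarrow> nat) \<Rightarrow> (bidx \<Rightarrow> complex) set" where
  "hspace N n = {v. \<forall>i. i \<notin> basis_idx N n \<longrightarrow> v i = 0}"

definition ket :: "bidx \<Rightarrow> bidx \<Rightarrow> complex" where
  "ket i = (\<lambda>j. if j = i then 1 else 0)"

type_synonym op = "bidx \<Rightarrow> bidx \<Rightarrow> complex"

definition apply_op :: "nat \<Rightarrow> (nat \<Rightarrow> nat) \<Rightarrow> op \<Rightarrow> (bidx \<Rightarrow> complex) \<Rightarrow> (bidx \<Rightarrow> complex)" where
  "apply_op N n A v = (\<lambda>i. if i \<in> basis_idx N n then (\<Sum>j\<in>basis_idx N n. A i j * v j) else 0)"

definition adj :: "op \<Rightarrow> op" where
  "adj A = (\<lambda>i j. cnj (A j i))"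

definition mmult :: "nat \<Rightarrow> (nat \<Rightarrow> nat) \<Rightarrow> op \<Rightarrow> op \<Rightarrow> op" where
  "mmult N n A B = (\<lambda>i j. \<Sum>l\<in>basis_idx N n. A i l * B l j)"

text \<open>|x><y| as the matrix with entries x_i * conj(y_j), i.e. u \<mapsto> <y,u> x.\<close>
definition outer :: "(bidx \<Rightarrow> complex) \<Rightarrow> (bidx \<Rightarrow> complex) \<Rightarrow> op" where
  "outer x y = (\<lambda>i j. x i * cnj (y j))"

definition zeta :: "(nat \<Rightarrow> nat) \<Rightarrow> nat \<Rightarrow> complex" where
  "zeta n k = exp (2 * pi * \<i> / of_nat (n k))"

definition phi :: "(nat \<Rightarrow> nat) \<Rightarrow> nat \<Rightarrow> nat \<Rightarrow> bidx \<Rightarrow> complex" where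
  "phi n k a = (\<lambda>i. (1 / complex_of_real (sqrt (real (n k)))) *
      (\<Sum>b<n k. inverse (zeta n k) ^ (b * a) * ket (BL k b) i))"

definition proj :: "(nat \<Rightarrow> nat) \<Rightarrow> nat \<Rightarrow> op" where
  "proj n k = (\<lambda>i j. \<Sum>a<n k. outer (ket (BL k a)) (ket (BL k a)) i j)"

definition Zop :: "(nat \<Rightarrow> nat) \<Rightarrow> nat \<Rightarrow> op" where
  "Zop n k = (\<lambda>i j. (1 / complex_of_real (sqrt (real (n k)))) *
      (\<Sum>b<n (k+1). \<Sum>a<n k. zeta n k ^ (b * a) * outer (ket (BL (k+1) b)) (ket (BL k a)) i j))"

definition smult_op :: "complex \<Rightarrow> op \<Rightarrow> op" where
  "smult_op c A = (\<lambda>i j. c * A i j)"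

definition kraus :: "nat \<Rightarrow> (nat \<Rightarrow> nat) \<Rightarrow> (sgn \<Rightarrow> omega \<Rightarrow> real) \<Rightarrow> sgn \<Rightarrow> omega \<Rightarrow> op" where
  "kraus N n Gam e w =
     (case (e, w) of
        (SMinus, OPlus) \<Rightarrow> smult_op (complex_of_real (sqrt (real (n 1) * Gam SMinus OPlus)))
                              (outer (phi n 1 0) (ket BPlus))
      | (SPlus, OPlus) \<Rightarrow> smult_op (complex_of_real (sqrt (real (n 1) * Gam SPlus OPlus)))
                              (outer (ket BPlus) (phi n 1 0))
      | (SMinus, OK k) \<Rightarrow> smult_op (complex_of_real (sqrt (Gam SMinus (OK k)))) (Zop n k)
      | (SPlus, OK k) \<Rightarrow> smult_op (complex_of_real (sqrt (Gam SPlus (OK k)))) (adj (Zop n k))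
      | (SMinus, OMinus) \<Rightarrow> smult_op (complex_of_real (sqrt (Gam SMinus OMinus)))
                              (outer (ket BMinus) (phi n N 0))
      | (SPlus, OMinus) \<Rightarrow> (\<lambda>i j. 0))"

definition omegas :: "nat \<Rightarrow> omega set" where
  "omegas N = {OPlus, OMinus} \<union> {OK k | k. 1 \<le> k \<and> k \<le> N - 1}"

definition kernel :: "nat \<Rightarrow> (nat \<Rightarrow> nat) \<Rightarrow> op \<Rightarrow> (bidx \<Rightarrow> complex) set" where
  "kernel N n A = {v \<in> hspace N n. apply_op N n A v = (\<lambda>i. 0)}"

definition op_range :: "nat \<Rightarrow> (nat \<Rightarrow> nat) \<Rightarrow> op \<Rightarrow> (bidx \<Rightarrow> complex) set" where
  "op_range N n A = apply_op N n A ` hspace N n"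

definition interaction_free :: "nat \<Rightarrow> (nat \<Rightarrow> nat) \<Rightarrow> (sgn \<Rightarrow> omega \<Rightarrow> real) \<Rightarrow> (bidx \<Rightarrow> complex) set" where
  "interaction_free N n Gam =
     hspace N n \<inter> (\<Inter>w\<in>omegas N. \<Inter>e\<in>{SPlus, SMinus}.
        kernel N n (kraus N n Gam e w) \<inter> kernel N n (adj (kraus N n Gam e w)))"

end

theory Submission
  imports Defs
begin

(* Because n_(k+1) <= n_k, the rows of Z_k are orthonormal characters of Z/n_k, so
   Z_k Z_k^* = P_(k+1) and ker Z_k^* is orthogonal to E_(k+1). Together with <+|v> = <-|v> = 0
   this confines an interaction-free vector to E_1 \<inter> ker Z_1; conversely every vector of
   E_1 \<inter> ker Z_1 is interaction free, the remaining condition <phi_(0_1)|v> = 0 being the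
   0_2-entry of Z_1 v = 0. Finally Z_1 (P_1 - Z_1^* Z_1) = Z_1 - P_2 Z_1 = 0, and P_1 - Z_1^* Z_1
   fixes E_1 \<inter> ker Z_1, so its range is exactly that subspace. *)

lemma stepwise_antimono_le:
  fixes n :: "nat \<Rightarrow> nat"
  assumes "\<And>k. 1 \<le> k \<Longrightarrow> k < N \<Longrightarrow> n (k + 1) \<le> n k" "1 \<le> i" "i \<le> j" "j \<le> N"
  shows "n j \<le> n i"
  using assms(3,4)
proof (induction j rule: dec_induct)
  case (step m)
  then show ?case
    using assms(1)[of m] assms(2) by simp
qed simp

lemma cis_sum_orthogonal:
  fixes m b b' :: nat
  assumes "b < m" "b' < m"
  shows "(\<Sum>a<m. cis (2 * pi / m) ^ (b * a) * cnj (cis (2 * pi / m) ^ (b' * a)))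
         = (if b = b' then of_nat m else 0)"
proof -
  define w where "w = cis (2 * pi * (real b - real b') / m)"
  have term_eq: "cis (2 * pi / m) ^ (b * a) * cnj (cis (2 * pi / m) ^ (b' * a)) = w ^ a" for a
    by (simp add: w_def DeMoivre cis_cnj cis_mult algebra_simps diff_divide_distrib)
  have "w ^ m = cis (2 * pi * (real b - real b'))"
    using assms by (simp add: w_def DeMoivre)
  also have "\<dots> = 1"
    by (rule cis_multiple_2pi) (metis Ints_diff Ints_of_nat)
  finally have w_m: "w ^ m = 1" .
  have w_ne_1: "w \<noteq> 1" if "b \<noteq> b'"
  proof
    assume "w = 1"
    then have "cos (2 * pi * (real b - real b') / m) = 1"
      by (simp add: w_def complex_eq_iff)
    then obtain k :: int where "2 * pi * (real b - real b') / m = of_int k * 2 * pi"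
      using cos_one_2pi_int by blast
    then have "pi * (real b - real b') = pi * (of_int k * real m)"
      using assms by (simp add: field_simps)
    then have "real b - real b' = of_int k * real m"
      by simp
    then have "int b - int b' = k * int m"
      by (metis of_int_eq_iff of_int_diff of_int_mult of_int_of_nat_eq)
    moreover have "\<bar>int b - int b'\<bar> < int m"
      using assms by linarith
    ultimately have "\<bar>k\<bar> * int m < 1 * int m"
      by (simp add: abs_mult)
    then have "k = 0"
      by (simp only: mult_less_cancel_right) linarith
    with \<open>int b - int b' = k * int m\<close> that show False
      by simp
  qed
  have "(\<Sum>a<m. cis (2 * pi / m) ^ (b * a) * cnj (cis (2 * pi / m) ^ (b' * a))) = (\<Sum>a<m. w ^ a)"
    by (simp only: term_eq)
  also have "\<dots> = (if b = b' then of_nat m else 0)"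
    using w_m w_ne_1 by (simp add: sum_gp_strict w_def)
  finally show ?thesis .
qed

definition block :: "(nat \<Rightarrow> nat) \<Rightarrow> nat \<Rightarrow> bidx set" where
  "block n k = BL k ` {..<n k}"

lemma BL_in_block_iff [simp]: "BL k' a \<in> block n k \<longleftrightarrow> k' = k \<and> a < n k"
  by (auto simp: block_def)

lemma in_block_unique: "j \<in> block n k \<Longrightarrow> j \<in> block n k' \<Longrightarrow> k = k'"
  by (auto simp: block_def)

lemma BMinus_BPlus_notin_block [simp]: "BMinus \<notin> block n k" "BPlus \<notin> block n k"
  by (auto simp: block_def)

lemma BL_in_basis_idx_iff [simp]: "BL k a \<in> basis_idx N n \<longleftrightarrow> 1 \<le> k \<and> k \<le> N \<and> a < n k"
  by (auto simp: basis_idx_def)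

lemma BMinus_BPlus_in_basis_idx [simp]: "BMinus \<in> basis_idx N n" "BPlus \<in> basis_idx N n"
  by (auto simp: basis_idx_def)

lemma finite_basis_idx [simp]: "finite (basis_idx N n)"
proof -
  have "basis_idx N n \<subseteq> {BMinus, BPlus} \<union> (\<Union>k\<le>N. block n k)"
    by (auto simp: basis_idx_def)
  then show ?thesis
    by (rule finite_subset) (simp add: block_def)
qed

lemma block_subset_basis_idx: "1 \<le> k \<Longrightarrow> k \<le> N \<Longrightarrow> block n k \<subseteq> basis_idx N n"
  by (auto simp: block_def)

lemma sum_basis_idx_block:
  assumes "1 \<le> k" "k \<le> N" "\<And>j. j \<notin> block n k \<Longrightarrow> g j = 0"
  shows "(\<Sum>j\<in>basis_idx N n. g j) = (\<Sum>a<n k. g (BL k a))"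
proof -
  have "(\<Sum>j\<in>basis_idx N n. g j) = (\<Sum>j\<in>block n k. g j)"
    using assms by (intro sum.mono_neutral_right block_subset_basis_idx) auto
  also have "\<dots> = (\<Sum>a<n k. g (BL k a))"
    unfolding block_def by (subst sum.reindex) (auto simp: inj_on_def)
  finally show ?thesis .
qed

lemma apply_op_in_hspace: "apply_op N n A v \<in> hspace N n"
  by (simp add: apply_op_def hspace_def)

lemma apply_op_zero_row: "(\<And>j. A i j = 0) \<Longrightarrow> apply_op N n A v i = 0"
  by (simp add: apply_op_def)

lemma apply_op_zero_vector: "apply_op N n A (\<lambda>i. 0) = (\<lambda>i. 0)"
  by (simp add: apply_op_def fun_eq_iff)

lemma apply_op_zero_op: "apply_op N n (\<lambda>i j. 0) v = (\<lambda>i. 0)"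
  by (simp add: apply_op_def fun_eq_iff)

lemma apply_op_diff:
  "apply_op N n (\<lambda>i j. A i j - B i j) v = (\<lambda>i. apply_op N n A v i - apply_op N n B v i)"
  by (simp add: apply_op_def fun_eq_iff left_diff_distrib sum_subtractf)

lemma apply_op_mmult: "apply_op N n (mmult N n A B) v = apply_op N n A (apply_op N n B v)"
proof (rule ext)
  fix i
  let ?I = "basis_idx N n"
  have "(\<Sum>j\<in>?I. (\<Sum>l\<in>?I. A i l * B l j) * v j) = (\<Sum>l\<in>?I. A i l * (\<Sum>j\<in>?I. B l j * v j))"
    by (simp add: sum_distrib_left sum_distrib_right mult.assoc) (rule sum.swap)
  then show "apply_op N n (mmult N n A B) v i = apply_op N n A (apply_op N n B v) i"
    by (simp add: apply_op_def mmult_def cong: sum.cong)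
qed

lemma mmult_assoc: "mmult N n (mmult N n A B) C = mmult N n A (mmult N n B C)"
  unfolding mmult_def
  by (auto simp: fun_eq_iff sum_distrib_left sum_distrib_right mult.assoc intro: sum.swap)

lemma mmult_diff_right:
  "mmult N n A (\<lambda>i j. B i j - C i j) = (\<lambda>i j. mmult N n A B i j - mmult N n A C i j)"
  by (simp add: mmult_def fun_eq_iff right_diff_distrib sum_subtractf)

lemma adj_adj [simp]: "adj (adj A) = A"
  by (simp add: adj_def)

lemma adj_zero [simp]: "adj (\<lambda>i j. 0) = (\<lambda>i j. 0)"
  by (simp add: adj_def)

lemma adj_smult_op: "adj (smult_op c A) = smult_op (cnj c) (adj A)"
  by (simp add: adj_def smult_op_def)

lemma adj_outer: "adj (outer x y) = outer y x"
  by (simp add: adj_def outer_def mult.commute)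

lemma apply_op_smult_op: "apply_op N n (smult_op c A) v = (\<lambda>i. c * apply_op N n A v i)"
  by (simp add: apply_op_def smult_op_def fun_eq_iff sum_distrib_left mult.assoc)

lemma kernel_subset_hspace: "kernel N n A \<subseteq> hspace N n"
  by (auto simp: kernel_def)

lemma kernel_smult_op: "c \<noteq> 0 \<Longrightarrow> kernel N n (smult_op c A) = kernel N n A"
  by (simp add: kernel_def apply_op_smult_op fun_eq_iff)

lemma kernel_zero_op: "kernel N n (\<lambda>i j. 0) = hspace N n"
  by (simp add: kernel_def apply_op_zero_op)

lemma kernel_outer:
  assumes "i \<in> basis_idx N n" "x i \<noteq> 0"
  shows "kernel N n (outer x y) = {v \<in> hspace N n. (\<Sum>j\<in>basis_idx N n. cnj (y j) * v j) = 0}"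
  using assms by (auto simp: kernel_def apply_op_def outer_def fun_eq_iff mult.assoc
      simp flip: sum_distrib_left)

lemma kernel_outer_ket:
  assumes "i \<in> basis_idx N n" "x i \<noteq> 0" "j \<in> basis_idx N n"
  shows "kernel N n (outer x (ket j)) = {v \<in> hspace N n. v j = 0}"
proof -
  have "(\<Sum>l\<in>basis_idx N n. cnj (ket j l) * v l) = (\<Sum>l\<in>basis_idx N n. if l = j then v l else 0)"
    for v :: "bidx \<Rightarrow> complex"
    by (rule sum.cong) (simp_all add: ket_def)
  then show ?thesis
    using assms by (simp add: kernel_outer)
qed

lemma in_kernel_if_supports_disjoint:
  assumes "v \<in> hspace N n" "\<And>j. j \<notin> E \<Longrightarrow> v j = 0" "\<And>i j. j \<in> E \<Longrightarrow> A i j = 0"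
  shows "v \<in> kernel N n A"
proof -
  have "A i j * v j = 0" for i j
    using assms(2,3) by (cases "j \<in> E") auto
  then show ?thesis
    using assms(1) by (simp add: kernel_def apply_op_def fun_eq_iff del: mult_eq_0_iff)
qed

lemma mult_if_zero [simp]:
  fixes x y :: "'a :: mult_zero"
  shows "(if P then y else 0) * x = (if P then y * x else 0)"
    and "x * (if P then y else 0) = (if P then x * y else 0)"
  by simp_all

lemma outer_ket_ket: "outer (ket p) (ket q) i j = (if i = p \<and> j = q then 1 else 0)"
  by (simp add: outer_def ket_def)

lemma proj_eq: "proj n k i j = (if i = j then if i \<in> block n k then 1 else 0 else 0)"
proof -
  have "proj n k i j = (\<Sum>a<n k. if i = BL k a \<and> j = BL k a then 1 else 0)"
    by (simp add: proj_def outer_ket_ket)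
  also have "\<dots> = (if i = j then if i \<in> block n k then 1 else 0 else 0)"
  proof (cases "i = j \<and> i \<in> block n k")
    case True
    then obtain a where "a < n k" "i = BL k a" "j = BL k a"
      unfolding block_def by blast
    then show ?thesis
      by simp
  next
    case False
    then show ?thesis
      by (auto intro!: sum.neutral)
  qed
  finally show ?thesis .
qed

lemma apply_op_proj:
  assumes "u \<in> hspace N n" "1 \<le> k" "k \<le> N"
  shows "apply_op N n (proj n k) u = (\<lambda>i. if i \<in> block n k then u i else 0)"
proof (rule ext)
  fix i
  show "apply_op N n (proj n k) u i = (if i \<in> block n k then u i else 0)"
    using assms block_subset_basis_idx[OF assms(2,3)]
    by (cases "i \<in> block n k") (auto simp: apply_op_def proj_eq)
qed

lemma mmult_proj_left:
  assumes "1 \<le> k" "k \<le> N" "\<And>i j. i \<notin> block n k \<Longrightarrow> A i j = 0"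
  shows "mmult N n (proj n k) A = A"
proof (intro ext)
  fix i j
  show "mmult N n (proj n k) A i j = A i j"
    using assms block_subset_basis_idx[OF assms(1,2)]
    by (cases "i \<in> block n k") (auto simp: mmult_def proj_eq)
qed

lemma mmult_proj_right:
  assumes "1 \<le> k" "k \<le> N" "\<And>i j. j \<notin> block n k \<Longrightarrow> A i j = 0"
  shows "mmult N n A (proj n k) = A"
proof (intro ext)
  fix i j
  show "mmult N n A (proj n k) i j = A i j"
    using assms block_subset_basis_idx[OF assms(1,2)]
    by (cases "j \<in> block n k") (auto simp: mmult_def proj_eq)
qed

lemma zeta_eq_cis: "zeta n k = cis (2 * pi / n k)"
  by (simp add: zeta_def cis_conv_exp mult.commute)

lemma Zop_BL:
  "Zop n k (BL k' b) (BL k'' a) =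
    (if k' = k + 1 \<and> k'' = k \<and> b < n (k + 1) \<and> a < n k
     then zeta n k ^ (b * a) / complex_of_real (sqrt (n k)) else 0)"
  unfolding Zop_def by (subst sum.swap) (auto simp: outer_ket_ket if_conn(1) cong: if_cong)

lemma Zop_eq_0:
  assumes "i \<notin> block n (k + 1) \<or> j \<notin> block n k"
  shows "Zop n k i j = 0"
proof -
  have "outer (ket (BL (k + 1) b)) (ket (BL k a)) i j = 0" if "b < n (k + 1)" "a < n k" for a b
    using assms that by (auto simp: outer_def ket_def)
  then show ?thesis
    by (simp add: Zop_def)
qed

lemma phi_0: "phi n k 0 j = (if j \<in> block n k then 1 / complex_of_real (sqrt (n k)) else 0)"
  by (cases j) (auto simp: phi_def ket_def)

lemma Zop_row_0:
  assumes "0 < n (k + 1)"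
  shows "Zop n k (BL (k + 1) 0) j = cnj (phi n k 0 j)"
proof (cases "j \<in> block n k")
  case True
  then obtain a where "a < n k" "j = BL k a"
    by (auto simp: block_def)
  with assms show ?thesis
    by (simp add: phi_0 Zop_BL)
next
  case False
  then show ?thesis
    by (simp add: phi_0 Zop_eq_0[OF disjI2])
qed

lemma mmult_Zop_adj:
  assumes "1 \<le> k" "k + 1 \<le> N" "n (k + 1) \<le> n k"
  shows "mmult N n (Zop n k) (adj (Zop n k)) = proj n (k + 1)"
proof (intro ext)
  fix i j
  show "mmult N n (Zop n k) (adj (Zop n k)) i j = proj n (k + 1) i j"
  proof (cases "i \<in> block n (k + 1) \<and> j \<in> block n (k + 1)")
    case True
    then obtain b b' where b: "b < n (k + 1)" "b' < n (k + 1)" "i = BL (k + 1) b" "j = BL (k + 1) b'"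
      unfolding block_def by blast
    have sqrt_sq: "complex_of_real (sqrt (n k)) * complex_of_real (sqrt (n k)) = of_nat (n k)"
      by (simp flip: of_real_mult)
    have "mmult N n (Zop n k) (adj (Zop n k)) i j
        = (\<Sum>a<n k. Zop n k i (BL k a) * cnj (Zop n k j (BL k a)))"
      unfolding mmult_def adj_def using assms by (intro sum_basis_idx_block) (auto simp: Zop_eq_0)
    also have "\<dots> = (\<Sum>a<n k. zeta n k ^ (b * a) * cnj (zeta n k ^ (b' * a))) / of_nat (n k)"
      using b assms by (simp add: Zop_BL sum_divide_distrib sqrt_sq flip: of_real_mult)
    also have "\<dots> = (if b = b' then 1 else 0)"
    proof -
      have "b < n k" "b' < n k"
        using b assms(3) by linarith+
      then show ?thesis
        unfolding zeta_eq_cis cis_sum_orthogonal[OF \<open>b < n k\<close> \<open>b' < n k\<close>] by simp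
    qed
    finally show ?thesis
      using b by (simp add: proj_eq)
  next
    case False
    then have "Zop n k i l * cnj (Zop n k j l) = 0" for l
      by (auto simp: Zop_eq_0)
    then have "mmult N n (Zop n k) (adj (Zop n k)) i j = 0"
      by (simp add: mmult_def adj_def del: mult_eq_0_iff)
    with False show ?thesis
      by (auto simp: proj_eq)
  qed
qed

lemma kernel_adj_Zop_vanishes_on_block:
  assumes "1 \<le> k" "k + 1 \<le> N" "n (k + 1) \<le> n k"
    and "v \<in> kernel N n (adj (Zop n k))" "j \<in> block n (k + 1)"
  shows "v j = 0"
proof -
  have "apply_op N n (proj n (k + 1)) v = apply_op N n (Zop n k) (apply_op N n (adj (Zop n k)) v)"
    unfolding mmult_Zop_adj[OF assms(1-3), symmetric] by (rule apply_op_mmult)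
  also have "\<dots> = (\<lambda>i. 0)"
    using assms(4) by (simp add: kernel_def apply_op_zero_vector)
  finally have "(\<lambda>i. if i \<in> block n (k + 1) then v i else 0) = (\<lambda>i. 0)"
    using assms by (simp add: apply_op_proj kernel_def)
  then show ?thesis
    using assms(5) by (metis (mono_tags, lifting))
qed

lemma mmult_Zop_complement_eq_0:
  assumes "1 \<le> k" "k + 1 \<le> N" "n (k + 1) \<le> n k"
  shows "mmult N n (Zop n k) (\<lambda>i j. proj n k i j - mmult N n (adj (Zop n k)) (Zop n k) i j)
         = (\<lambda>i j. 0)"
proof -
  have "mmult N n (Zop n k) (proj n k) = Zop n k"
    using assms by (intro mmult_proj_right) (auto simp: Zop_eq_0)
  moreover have "mmult N n (Zop n k) (mmult N n (adj (Zop n k)) (Zop n k)) = Zop n k"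
    using assms by (simp flip: mmult_assoc add: mmult_Zop_adj mmult_proj_left Zop_eq_0)
  ultimately show ?thesis
    by (simp add: mmult_diff_right)
qed

lemma op_range_complement_eq_kernel_Zop_on_block:
  assumes "1 \<le> k" "k + 1 \<le> N" "n (k + 1) \<le> n k"
  shows "op_range N n (\<lambda>i j. proj n k i j - mmult N n (adj (Zop n k)) (Zop n k) i j)
         = {v \<in> kernel N n (Zop n k). \<forall>i. i \<notin> block n k \<longrightarrow> v i = 0}"
    (is "op_range N n ?M = ?S")
proof
  show "op_range N n ?M \<subseteq> ?S"
  proof
    fix v assume "v \<in> op_range N n ?M"
    then obtain u where v: "v = apply_op N n ?M u"
      unfolding op_range_def by blast
    have "apply_op N n (Zop n k) v = (\<lambda>i. 0)"
      using assms by (simp add: v flip: apply_op_mmult add: mmult_Zop_complement_eq_0 apply_op_zero_op)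
    moreover have "v i = 0" if "i \<notin> block n k" for i
      unfolding v using that by (intro apply_op_zero_row) (auto simp: proj_eq mmult_def adj_def Zop_eq_0)
    ultimately show "v \<in> ?S"
      by (simp add: kernel_def v apply_op_in_hspace)
  qed
next
  show "?S \<subseteq> op_range N n ?M"
  proof
    fix v assume v: "v \<in> ?S"
    then have Zv: "apply_op N n (Zop n k) v = (\<lambda>i. 0)" and "v \<in> hspace N n"
      by (simp_all add: kernel_def)
    have "apply_op N n ?M v = (\<lambda>i. apply_op N n (proj n k) v i
        - apply_op N n (adj (Zop n k)) (apply_op N n (Zop n k) v) i)"
      by (simp add: apply_op_diff apply_op_mmult)
    also have "\<dots> = (\<lambda>i. if i \<in> block n k then v i else 0)"
      using \<open>v \<in> hspace N n\<close> assms by (simp add: Zv apply_op_zero_vector apply_op_proj)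
    also have "\<dots> = v"
      using v by auto
    finally have "v = apply_op N n ?M v" ..
    with \<open>v \<in> hspace N n\<close> show "v \<in> op_range N n ?M"
      unfolding op_range_def by blast
  qed
qed

(* L_(-,omega) without its rate factor; L_(+,omega) is a nonzero multiple of its adjoint,
   except L_(+,omega_-) = 0, which imposes no condition. *)
definition jump :: "nat \<Rightarrow> (nat \<Rightarrow> nat) \<Rightarrow> omega \<Rightarrow> op" where
  "jump N n w =
     (case w of
        OPlus \<Rightarrow> outer (phi n 1 0) (ket BPlus)
      | OMinus \<Rightarrow> outer (ket BMinus) (phi n N 0)
      | OK k \<Rightarrow> Zop n k)"

lemma kernels_kraus_eq_kernels_jump:
  assumes "0 < Gam SPlus w" "0 < Gam SMinus w" "0 < n 1"
  shows "(\<Inter>e\<in>{SPlus, SMinus}. kernel N n (kraus N n Gam e w) \<inter> kernel N n (adj (kraus N n Gam e w)))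
         = kernel N n (jump N n w) \<inter> kernel N n (adj (jump N n w))"
  using assms kernel_subset_hspace
  by (cases w) (auto simp: kraus_def jump_def kernel_smult_op adj_smult_op adj_outer kernel_zero_op)

lemma interaction_free_eq_jump_kernels:
  assumes "\<And>e w. w \<in> omegas N \<Longrightarrow> 0 < Gam e w" "0 < n 1"
  shows "interaction_free N n Gam
         = hspace N n \<inter> (\<Inter>w\<in>omegas N. kernel N n (jump N n w) \<inter> kernel N n (adj (jump N n w)))"
proof -
  have "(\<Inter>e\<in>{SPlus, SMinus}. kernel N n (kraus N n Gam e w) \<inter> kernel N n (adj (kraus N n Gam e w)))
         = kernel N n (jump N n w) \<inter> kernel N n (adj (jump N n w))" if "w \<in> omegas N" for w
    using assms that by (intro kernels_kraus_eq_kernels_jump) auto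
  then show ?thesis
    unfolding interaction_free_def by (simp cong: INF_cong)
qed

lemma vanishes_off_block_1_if_in_jump_kernels:
  assumes "1 \<le> N" "\<And>k. 1 \<le> k \<Longrightarrow> k < N \<Longrightarrow> n (k + 1) \<le> n k" "\<And>k. 1 \<le> k \<Longrightarrow> k \<le> N \<Longrightarrow> 0 < n k"
    and "v \<in> hspace N n" "\<And>w. w \<in> omegas N \<Longrightarrow> v \<in> kernel N n (jump N n w) \<inter> kernel N n (adj (jump N n w))"
    and "i \<notin> block n 1"
  shows "v i = 0"
proof (cases i)
  case BMinus
  have "OMinus \<in> omegas N"
    by (simp add: omegas_def)
  from assms(5)[OF this] have "v \<in> kernel N n (adj (jump N n OMinus))"
    by simp
  also have "\<dots> = {v \<in> hspace N n. v BMinus = 0}"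
    unfolding jump_def omega.case adj_outer using assms(1) assms(3)[of N]
    by (intro kernel_outer_ket[of "BL N 0"]) (auto simp: phi_0)
  finally show ?thesis
    using BMinus by simp
next
  case BPlus
  have "OPlus \<in> omegas N"
    by (simp add: omegas_def)
  from assms(5)[OF this] have "v \<in> kernel N n (jump N n OPlus)"
    by simp
  also have "\<dots> = {v \<in> hspace N n. v BPlus = 0}"
    unfolding jump_def omega.case using assms(1) assms(3)[of 1]
    by (intro kernel_outer_ket[of "BL 1 0"]) (auto simp: phi_0)
  finally show ?thesis
    using BPlus by simp
next
  case (BL k a)
  show ?thesis
  proof (cases "i \<in> basis_idx N n")
    case False
    with assms(4) show ?thesis
      by (simp add: hspace_def)
  next
    case True
    with BL assms(6) have "k \<noteq> 1"
      by auto
    define k' where "k' = k - 1"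
    have k': "k = k' + 1" "1 \<le> k'" "k' + 1 \<le> N" "a < n k"
      using BL True \<open>k \<noteq> 1\<close> by (auto simp: k'_def)
    then have "v \<in> kernel N n (jump N n (OK k')) \<inter> kernel N n (adj (jump N n (OK k')))"
      by (intro assms(5)) (auto simp: omegas_def)
    then have "v \<in> kernel N n (adj (Zop n k'))"
      by (simp add: jump_def)
    with k' assms(2)[of k'] show ?thesis
      using BL by (intro kernel_adj_Zop_vanishes_on_block[of k' N n]) auto
  qed
qed

lemma in_jump_kernels_if_in_kernel_Zop_1:
  assumes "2 \<le> N" "0 < n 2" "v \<in> kernel N n (Zop n 1)" "\<And>i. i \<notin> block n 1 \<Longrightarrow> v i = 0"
    and "w \<in> omegas N"
  shows "v \<in> kernel N n (jump N n w) \<inter> kernel N n (adj (jump N n w))"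
proof -
  have v: "v \<in> hspace N n"
    using assms(3) by (simp add: kernel_def)
  have in_kernel: "v \<in> kernel N n A" if "\<And>i j. j \<in> block n 1 \<Longrightarrow> A i j = 0" for A
    using v assms(4) that by (rule in_kernel_if_supports_disjoint)
  show ?thesis
  proof (cases w)
    case OPlus
    have "(\<Sum>j\<in>basis_idx N n. cnj (phi n 1 0 j) * v j) = apply_op N n (Zop n 1) v (BL 2 0)"
      using assms(1,2) Zop_row_0[of n 1] by (simp add: apply_op_def numeral_2_eq_2)
    also have "\<dots> = 0"
      using assms(3) by (simp add: kernel_def)
    finally have "v \<in> kernel N n (outer (ket BPlus) (phi n 1 0))"
      using v by (subst kernel_outer[of BPlus]) (simp_all add: ket_def)
    moreover have "v \<in> kernel N n (outer (phi n 1 0) (ket BPlus))"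
      by (rule in_kernel) (auto simp: outer_def ket_def)
    ultimately show ?thesis
      using OPlus by (simp add: jump_def adj_outer)
  next
    case OMinus
    have "v \<in> kernel N n (outer (ket BMinus) (phi n N 0))"
      by (rule in_kernel) (use assms(1) in \<open>auto simp: outer_def phi_0 dest: in_block_unique\<close>)
    moreover have "v \<in> kernel N n (outer (phi n N 0) (ket BMinus))"
      by (rule in_kernel) (auto simp: outer_def ket_def)
    ultimately show ?thesis
      using OMinus by (simp add: jump_def adj_outer)
  next
    case (OK k)
    with assms(5) have "1 \<le> k"
      by (simp add: omegas_def)
    then have "v \<in> kernel N n (Zop n k)"
      using assms(3) by (cases "k = 1") (auto intro!: in_kernel Zop_eq_0 dest: in_block_unique)
    moreover have "v \<in> kernel N n (adj (Zop n k))"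
      using \<open>1 \<le> k\<close> by (auto simp: adj_def intro!: in_kernel Zop_eq_0 dest: in_block_unique)
    ultimately show ?thesis
      using OK by (simp add: jump_def)
  qed
qed

lemma jump_kernels_eq_kernel_Zop_on_block_1:
  assumes "2 \<le> N" "\<And>k. 1 \<le> k \<Longrightarrow> k < N \<Longrightarrow> n (k + 1) \<le> n k" "\<And>k. 1 \<le> k \<Longrightarrow> k \<le> N \<Longrightarrow> 0 < n k"
  shows "hspace N n \<inter> (\<Inter>w\<in>omegas N. kernel N n (jump N n w) \<inter> kernel N n (adj (jump N n w)))
         = {v \<in> kernel N n (Zop n 1). \<forall>i. i \<notin> block n 1 \<longrightarrow> v i = 0}"
proof (intro equalityI subsetI)
  fix v
  assume v: "v \<in> hspace N n \<inter> (\<Inter>w\<in>omegas N. kernel N n (jump N n w) \<inter> kernel N n (adj (jump N n w)))"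
  have "OK 1 \<in> omegas N"
    using assms(1) by (simp add: omegas_def)
  with v have "v \<in> kernel N n (Zop n 1)"
    by (auto simp: jump_def)
  moreover have "v i = 0" if "i \<notin> block n 1" for i
    using assms v that by (intro vanishes_off_block_1_if_in_jump_kernels[of N n v]) auto
  ultimately show "v \<in> {v \<in> kernel N n (Zop n 1). \<forall>i. i \<notin> block n 1 \<longrightarrow> v i = 0}"
    by blast
next
  fix v
  assume v: "v \<in> {v \<in> kernel N n (Zop n 1). \<forall>i. i \<notin> block n 1 \<longrightarrow> v i = 0}"
  then have "v \<in> hspace N n"
    by (simp add: kernel_def)
  moreover have "v \<in> kernel N n (jump N n w) \<inter> kernel N n (adj (jump N n w))" if "w \<in> omegas N" for w
    using v assms(1) assms(3)[of 2] that by (intro in_jump_kernels_if_in_kernel_Zop_1) auto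
  ultimately show
    "v \<in> hspace N n \<inter> (\<Inter>w\<in>omegas N. kernel N n (jump N n w) \<inter> kernel N n (adj (jump N n w)))"
    by blast
qed

theorem proposition3p5:
  fixes N :: nat and n :: "nat \<Rightarrow> nat" and Gam :: "sgn \<Rightarrow> omega \<Rightarrow> real"
  assumes "N \<ge> 2"
    and "\<And>k. 1 \<le> k \<Longrightarrow> k < N \<Longrightarrow> n (k + 1) \<le> n k"
    and "n N \<ge> 1"
    and "\<And>e w. w \<in> omegas N \<Longrightarrow> Gam e w > 0"
  shows "interaction_free N n Gam =
         op_range N n (\<lambda>i j. proj n 1 i j - mmult N n (adj (Zop n 1)) (Zop n 1) i j)"
proof -
  have pos: "0 < n k" if "1 \<le> k" "k \<le> N" for k
    using stepwise_antimono_le[of N n, OF assms(2) that order_refl] assms(3) by linarith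
  have "interaction_free N n Gam
      = hspace N n \<inter> (\<Inter>w\<in>omegas N. kernel N n (jump N n w) \<inter> kernel N n (adj (jump N n w)))"
    using assms(1,4) pos[of 1] by (intro interaction_free_eq_jump_kernels) auto
  also have "\<dots> = {v \<in> kernel N n (Zop n 1). \<forall>i. i \<notin> block n 1 \<longrightarrow> v i = 0}"
    using assms(1,2) pos by (rule jump_kernels_eq_kernel_Zop_on_block_1)
  also have "\<dots> = op_range N n (\<lambda>i j. proj n 1 i j - mmult N n (adj (Zop n 1)) (Zop n 1) i j)"
    using assms(1) assms(2)[of 1] by (intro op_range_complement_eq_kernel_Zop_on_block[symmetric]) auto
  finally show ?thesis .
qed

end
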